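(* Let $v\ge 2$ and $s\ge 2$ be integers. Then (1) $K_{v}^{RT}(2,s,s)\le v^{s-2}(v^{2}-1)$; (2) $K_{v}^{RT}(3,s,2s-1)\le v(v^{s}-1)$.
   Context: For positive integers $m,s$, the RT poset $[m\times s]$ is the set $\{1,\ldots,ms\}$ partitioned into $m$ blocks $B_i=\{is+1,\ldots,(i+1)s\}$; each block is a chain under the usual order of the integers, and elements of different blocks are incomparable. An ideal is a down-closed subset; $\langle A\rangle$ denotes the smallest ideal containing $A$. For $x,y\in\mathbb{Z}_v^{ms}$, $d_{RT}(x,y)=|\langle\{i:x_i\neq y_i\}\rangle|$. A code $C\subseteq \mathbb{Z}_v^{ms}$ is an $R$-covering if every $x\in\mathbb{Z}_v^{ms}$ has some $c\in C$ with $d_{RT}(x,c)\le R$; $K_v^{RT}(m,s,R)$ is the smallest size of an $R$-covering. *)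

theory Defs
  imports Main
begin

text \<open>Coordinates are 0-indexed: position j (j < m*s) lies in block j div s
  (block i = {i*s ..< (i+1)*s}), and within a block the order is the usual order.\<close>

definition rt_le :: "nat \<Rightarrow> nat \<Rightarrow> nat \<Rightarrow> bool" where
  "rt_le s i j \<longleftrightarrow> i div s = j div s \<and> i \<le> j"

definition rt_ideal :: "nat \<Rightarrow> nat set \<Rightarrow> nat set" where
  "rt_ideal s A = {i. \<exists>a\<in>A. rt_le s i a}"

definition words :: "nat \<Rightarrow> nat \<Rightarrow> (nat \<Rightarrow> nat) set" where
  "words v n = {x. (\<forall>j<n. x j < v) \<and> (\<forall>j\<ge>n. x j = 0)}"

definition d_RT :: "nat \<Rightarrow> nat \<Rightarrow> (nat \<Rightarrow> nat) \<Rightarrow> (nat \<Rightarrow> nat) \<Rightarrow> nat" where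
  "d_RT m s x y = card (rt_ideal s {i. i < m * s \<and> x i \<noteq> y i})"

definition is_RT_covering :: "nat \<Rightarrow> nat \<Rightarrow> nat \<Rightarrow> nat \<Rightarrow> (nat \<Rightarrow> nat) set \<Rightarrow> bool" where
  "is_RT_covering v m s R C \<longleftrightarrow> C \<subseteq> words v (m * s) \<and>
     (\<forall>x\<in>words v (m * s). \<exists>c\<in>C. d_RT m s x c \<le> R)"

definition K_RT :: "nat \<Rightarrow> nat \<Rightarrow> nat \<Rightarrow> nat \<Rightarrow> nat" where
  "K_RT v m s R = (LEAST k. \<exists>C. is_RT_covering v m s R C \<and> card C = k)"

end

theory Submission
  imports Defs
begin

text \<open>If in every block i the word c agrees with x outside the first r i positions, then
  d_RT x c is at most the sum of the r i. For two blocks we use the codewords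
  (y, 0..0 y0 y1) with (y0, y1) \<noteq> (0, 0): a word x with (x0, x1) \<noteq> (0, 0) is matched on
  block 0 at cost s; otherwise the last two entries of block 1 are copied into positions 0
  and 1 (cost 2 + (s - 2)), or, when they vanish as well, position 0 is set to 1
  (cost 1 + (s - 1)). For three blocks we use the v^(s+1) - v codewords (u, 0..0t, 0..0t)
  with u \<noteq> 0..0t: a word x is matched on block 0 and on the last entry t of block 1, or,
  if block 0 of x is the excluded 0..0t, on the last entry t' of block 2; if moreover
  t' = t, position 0 is set to 1 instead.\<close>

lemma K_RT_le:
  assumes "is_RT_covering v m s R C" and "card C \<le> k"
  shows "K_RT v m s R \<le> k"
proof -
  have "K_RT v m s R \<le> card C"
    unfolding K_RT_def using assms(1) by (intro Least_le) blast
  with assms(2) show ?thesis by linarith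
qed

lemma words_Suc:
  "words v (Suc n) = (\<lambda>(x, a). x(n := a)) ` (words v n \<times> {..<v})"
proof
  show "words v (Suc n) \<subseteq> (\<lambda>(x, a). x(n := a)) ` (words v n \<times> {..<v})"
  proof
    fix y assume y: "y \<in> words v (Suc n)"
    then have "(y(n := 0), y n) \<in> words v n \<times> {..<v}"
      unfolding words_def by auto
    moreover have "y = (\<lambda>(x, a). x(n := a)) (y(n := 0), y n)" by simp
    ultimately show "y \<in> (\<lambda>(x, a). x(n := a)) ` (words v n \<times> {..<v})" by blast
  qed
qed (auto simp: words_def)

lemma words_0: "words v 0 = {\<lambda>_. 0}"
  unfolding words_def by auto

lemma finite_words: "finite (words v n)"
  by (induction n) (simp_all add: words_0 words_Suc)

lemma card_words: "card (words v n) = v ^ n"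
proof (induction n)
  case 0
  show ?case by (simp add: words_0)
next
  case (Suc n)
  have "inj_on (\<lambda>(x, a). x(n := a)) (words v n \<times> {..<v})"
  proof (rule inj_onI, clarify)
    fix x a y b
    assume "x \<in> words v n" "y \<in> words v n" and upd: "x(n := a) = y(n := b)"
    then have "x n = y n" unfolding words_def by simp
    with upd show "x = y \<and> a = b"
      by (metis fun_upd_eqD fun_upd_triv fun_upd_upd)
  qed
  then show ?case
    using Suc by (simp add: words_Suc card_image card_cartesian_product finite_words)
qed

definition shift_word :: "nat \<Rightarrow> (nat \<Rightarrow> nat) \<Rightarrow> nat \<Rightarrow> nat" where
  "shift_word k x j = (if k \<le> j then x (j - k) else 0)"

lemma card_words_zero_prefix:
  assumes "0 < v"
  shows "card {y \<in> words v (k + n). \<forall>j<k. y j = 0} = v ^ n"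
proof -
  have "{y \<in> words v (k + n). \<forall>j<k. y j = 0} = shift_word k ` words v n"
  proof
    show "{y \<in> words v (k + n). \<forall>j<k. y j = 0} \<subseteq> shift_word k ` words v n"
    proof
      fix y assume y: "y \<in> {y \<in> words v (k + n). \<forall>j<k. y j = 0}"
      then have "y = shift_word k (\<lambda>j. y (j + k))"
        by (auto simp: shift_word_def)
      moreover have "(\<lambda>j. y (j + k)) \<in> words v n"
        using y unfolding words_def by auto
      ultimately show "y \<in> shift_word k ` words v n" by blast
    qed
  qed (use assms in \<open>auto simp: shift_word_def words_def\<close>)
  moreover have "inj_on (shift_word k) (words v n)"
  proof (rule inj_onI)
    fix x y assume "shift_word k x = shift_word k y"
    then have "shift_word k x (j + k) = shift_word k y (j + k)" for j by simp
    then show "x = y" by (simp add: shift_word_def fun_eq_iff)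
  qed
  ultimately show ?thesis by (simp add: card_image card_words)
qed

definition take_word :: "nat \<Rightarrow> (nat \<Rightarrow> nat) \<Rightarrow> nat \<Rightarrow> nat" where
  "take_word k x j = (if j < k then x j else 0)"

lemma take_word_in_words: "x \<in> words v n \<Longrightarrow> k \<le> n \<Longrightarrow> take_word k x \<in> words v k"
  unfolding words_def take_word_def by auto

lemma d_RT_le_sum_prefixes:
  assumes agree: "\<And>i j. i < m \<Longrightarrow> r i \<le> j \<Longrightarrow> j < s \<Longrightarrow> x (i * s + j) = c (i * s + j)"
  shows "d_RT m s x c \<le> (\<Sum>i<m. r i)"
proof -
  define T where "T = {k. k < m * s \<and> k mod s < r (k div s)}"
  have ideal_T: "rt_ideal s {k. k < m * s \<and> x k \<noteq> c k} \<subseteq> T"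
  proof
    fix k assume "k \<in> rt_ideal s {k. k < m * s \<and> x k \<noteq> c k}"
    then obtain a where a: "a < m * s" "x a \<noteq> c a" and "k div s = a div s" "k \<le> a"
      unfolding rt_ideal_def rt_le_def by blast
    then have "k mod s \<le> a mod s"
      using div_mult_mod_eq[of k s] div_mult_mod_eq[of a s] by (metis add_le_cancel_left)
    moreover have "a mod s < r (a div s)"
    proof (rule ccontr)
      assume "\<not> a mod s < r (a div s)"
      moreover have "0 < s"
        using a(1) by (cases "s = 0") auto
      with a(1) have "a div s < m" "a mod s < s"
        by (simp_all add: less_mult_imp_div_less)
      ultimately have "x (a div s * s + a mod s) = c (a div s * s + a mod s)"
        by (intro agree) auto
      with a(2) show False by simp
    qed
    ultimately show "k \<in> T"
      unfolding T_def using a(1) \<open>k div s = a div s\<close> \<open>k \<le> a\<close> by auto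
  qed
  have "T \<subseteq> (\<Union>i<m. (\<lambda>j. i * s + j) ` {..<r i})"
  proof
    fix k assume k: "k \<in> T"
    then have "k div s < m"
      unfolding T_def by (auto simp: less_mult_imp_div_less)
    moreover have "k = k div s * s + k mod s" by simp
    ultimately show "k \<in> (\<Union>i<m. (\<lambda>j. i * s + j) ` {..<r i})"
      using k unfolding T_def by blast
  qed
  then have "card T \<le> card (\<Union>i<m. (\<lambda>j. i * s + j) ` {..<r i})"
    by (intro card_mono) auto
  also have "\<dots> \<le> (\<Sum>i<m. card ((\<lambda>j. i * s + j) ` {..<r i}))"
    by (rule card_UN_le) simp
  also have "\<dots> \<le> (\<Sum>i<m. r i)"
    by (intro sum_mono) (metis card_image_le card_lessThan finite_lessThan)
  finally have "card T \<le> (\<Sum>i<m. r i)" .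
  moreover have "finite T"
    unfolding T_def by simp
  ultimately show ?thesis
    unfolding d_RT_def using ideal_T card_mono le_trans by blast
qed

lemma d_RT_two_blocks_le:
  assumes "\<And>j. r0 \<le> j \<Longrightarrow> j < s \<Longrightarrow> x j = c j"
    and "\<And>j. r1 \<le> j \<Longrightarrow> j < s \<Longrightarrow> x (s + j) = c (s + j)"
  shows "d_RT 2 s x c \<le> r0 + r1"
proof -
  have "d_RT 2 s x c \<le> (\<Sum>i::nat<2. if i = 0 then r0 else r1)"
  proof (rule d_RT_le_sum_prefixes)
    fix i j :: nat
    assume "i < 2" and "(if i = 0 then r0 else r1) \<le> j" and "j < s"
    then consider "i = 0" "r0 \<le> j" | "i = 1" "r1 \<le> j" by (auto split: if_splits)
    then show "x (i * s + j) = c (i * s + j)"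
      using assms \<open>j < s\<close> by cases auto
  qed
  then show ?thesis by (simp add: numeral_2_eq_2)
qed

lemma d_RT_three_blocks_le:
  assumes "\<And>j. r0 \<le> j \<Longrightarrow> j < s \<Longrightarrow> x j = c j"
    and "\<And>j. r1 \<le> j \<Longrightarrow> j < s \<Longrightarrow> x (s + j) = c (s + j)"
    and "\<And>j. r2 \<le> j \<Longrightarrow> j < s \<Longrightarrow> x (2 * s + j) = c (2 * s + j)"
  shows "d_RT 3 s x c \<le> r0 + r1 + r2"
proof -
  have "d_RT 3 s x c \<le> (\<Sum>i::nat<3. if i = 0 then r0 else if i = 1 then r1 else r2)"
  proof (rule d_RT_le_sum_prefixes)
    fix i j :: nat
    assume "i < 3" and "(if i = 0 then r0 else if i = 1 then r1 else r2) \<le> j" and "j < s"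
    then consider "i = 0" "r0 \<le> j" | "i = 1" "r1 \<le> j" | "i = 2" "r2 \<le> j" by (auto split: if_splits)
    then show "x (i * s + j) = c (i * s + j)"
      using assms \<open>j < s\<close> by cases auto
  qed
  then show ?thesis by (simp add: numeral_3_eq_3)
qed

definition two_block_word :: "nat \<Rightarrow> (nat \<Rightarrow> nat) \<Rightarrow> nat \<Rightarrow> nat" where
  "two_block_word s y j =
     (if j < s then y j else if j = 2 * s - 2 then y 0 else if j = 2 * s - 1 then y 1 else 0)"

definition two_block_code :: "nat \<Rightarrow> nat \<Rightarrow> (nat \<Rightarrow> nat) set" where
  "two_block_code v s = two_block_word s ` {y \<in> words v s. y 0 \<noteq> 0 \<or> y 1 \<noteq> 0}"

lemma card_two_block_code:
  assumes "2 \<le> s" and "0 < v"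
  shows "card (two_block_code v s) \<le> v ^ (s - 2) * (v ^ 2 - 1)"
proof -
  let ?Z = "{y \<in> words v s. \<forall>j<2. y j = 0}"
  have card_Z: "card ?Z = v ^ (s - 2)"
    using card_words_zero_prefix[OF assms(2), of 2 "s - 2"]
    unfolding le_add_diff_inverse[OF assms(1)] .
  have "{y \<in> words v s. y 0 \<noteq> 0 \<or> y 1 \<noteq> 0} = words v s - ?Z"
    by (auto simp: less_2_cases_iff)
  then have "card (two_block_code v s) \<le> card (words v s - ?Z)"
    unfolding two_block_code_def by (simp add: card_image_le finite_words)
  also have "\<dots> = v ^ s - v ^ (s - 2)"
    using card_Z by (simp add: card_Diff_subset finite_words card_words)
  also have "\<dots> = v ^ (s - 2) * (v ^ 2 - 1)"
    unfolding diff_mult_distrib2 power_add[symmetric] le_add_diff_inverse2[OF assms(1)] by simp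
  finally show ?thesis .
qed

lemma two_block_code_covering:
  assumes "2 \<le> s" and "2 \<le> v"
  shows "is_RT_covering v 2 s s (two_block_code v s)"
  unfolding is_RT_covering_def
proof (intro conjI ballI)
  show "two_block_code v s \<subseteq> words v (2 * s)"
    using assms unfolding two_block_code_def two_block_word_def words_def by auto
next
  fix x assume x: "x \<in> words v (2 * s)"
  then have x_lt: "x j < v" if "j < 2 * s" for j
    using that unfolding words_def by blast
  let ?Y = "{y \<in> words v s. y 0 \<noteq> 0 \<or> y 1 \<noteq> 0}"
  consider (head) "x 0 \<noteq> 0 \<or> x 1 \<noteq> 0"
    | (tail) "x 0 = 0" "x 1 = 0" "x (2 * s - 2) \<noteq> 0 \<or> x (2 * s - 1) \<noteq> 0"
    | (zero) "x 0 = 0" "x 1 = 0" "x (2 * s - 2) = 0" "x (2 * s - 1) = 0"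
    by blast
  then show "\<exists>c\<in>two_block_code v s. d_RT 2 s x c \<le> s"
  proof cases
    case head
    let ?y = "take_word s x"
    have "?y \<in> ?Y"
      using head take_word_in_words[OF x] assms by (auto simp: take_word_def)
    moreover have "d_RT 2 s x (two_block_word s ?y) \<le> 0 + s"
      by (rule d_RT_two_blocks_le) (auto simp: two_block_word_def take_word_def)
    ultimately show ?thesis unfolding two_block_code_def by auto
  next
    case tail
    let ?y = "(take_word s x)(0 := x (2 * s - 2), 1 := x (2 * s - 1))"
    have "?y \<in> ?Y"
      using tail take_word_in_words[OF x] x_lt assms by (auto simp: words_def)
    moreover have "d_RT 2 s x (two_block_word s ?y) \<le> 2 + (s - 2)"
    proof (rule d_RT_two_blocks_le)
      fix j assume "s - 2 \<le> j" "j < s"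
      then consider "j = s - 2" | "j = s - 1" by linarith
      then show "x (s + j) = two_block_word s ?y (s + j)"
        using assms by cases (auto simp: two_block_word_def mult_2)
    qed (auto simp: two_block_word_def take_word_def)
    ultimately show ?thesis
      unfolding two_block_code_def using assms by force
  next
    case zero
    let ?y = "(take_word s x)(0 := 1)"
    have "?y \<in> ?Y"
      using take_word_in_words[OF x] assms by (auto simp: words_def)
    moreover have "d_RT 2 s x (two_block_word s ?y) \<le> 1 + (s - 1)"
    proof (rule d_RT_two_blocks_le)
      fix j assume "s - 1 \<le> j" "j < s"
      then have "s + j = 2 * s - 1" by linarith
      then show "x (s + j) = two_block_word s ?y (s + j)"
        using zero assms by (simp add: two_block_word_def take_word_def)
    qed (auto simp: take_word_def two_block_word_def)
    ultimately show ?thesis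
      unfolding two_block_code_def using assms by force
  qed
qed

definition last_only_word :: "nat \<Rightarrow> nat \<Rightarrow> nat \<Rightarrow> nat" where
  "last_only_word s t j = (if j = s - 1 then t else 0)"

definition three_block_word :: "nat \<Rightarrow> (nat \<Rightarrow> nat) \<Rightarrow> nat \<Rightarrow> nat \<Rightarrow> nat" where
  "three_block_word s u t j = (if j < s then u j else if j = 2 * s - 1 \<or> j = 3 * s - 1 then t else 0)"

definition three_block_code :: "nat \<Rightarrow> nat \<Rightarrow> (nat \<Rightarrow> nat) set" where
  "three_block_code v s = (\<lambda>(u, t). three_block_word s u t) `
     (words v s \<times> {..<v} - (\<lambda>t. (last_only_word s t, t)) ` {..<v})"

lemma card_three_block_code:
  assumes "0 < s"
  shows "card (three_block_code v s) \<le> v * (v ^ s - 1)"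
proof -
  let ?E = "(\<lambda>t. (last_only_word s t, t)) ` {..<v}"
  have E_sub: "?E \<subseteq> words v s \<times> {..<v}"
    using assms unfolding last_only_word_def words_def by auto
  have card_E: "card ?E = v"
    by (simp add: card_image inj_on_def)
  have "card (three_block_code v s) \<le> card (words v s \<times> {..<v} - ?E)"
    unfolding three_block_code_def by (simp add: card_image_le finite_words)
  also have "\<dots> = v ^ s * v - v"
    using E_sub card_E
    by (simp add: card_Diff_subset finite_subset finite_words card_words card_cartesian_product)
  also have "\<dots> = v * (v ^ s - 1)"
    by (simp add: diff_mult_distrib2 mult.commute)
  finally show ?thesis .
qed

lemma three_block_code_covering:
  assumes "2 \<le> s" and "2 \<le> v"
  shows "is_RT_covering v 3 s (2 * s - 1) (three_block_code v s)"
  unfolding is_RT_covering_def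
proof (intro conjI ballI)
  show "three_block_code v s \<subseteq> words v (3 * s)"
    using assms unfolding three_block_code_def three_block_word_def words_def by auto
next
  fix x assume x: "x \<in> words v (3 * s)"
  let ?a = "take_word s x" and ?t = "x (2 * s - 1)" and ?t' = "x (3 * s - 1)"
  have a: "?a \<in> words v s"
    using take_word_in_words[OF x] by simp
  have t: "?t < v" "?t' < v"
    using x assms unfolding words_def by auto
  have code_mem: "three_block_word s u t \<in> three_block_code v s"
    if "u \<in> words v s" "t < v" "u \<noteq> last_only_word s t" for u t
    using that unfolding three_block_code_def by force
  have block_1: "s + j = 2 * s - 1" and block_2: "2 * s + j = 3 * s - 1"
    if "s - 1 \<le> j" "j < s" for j
    using that by auto
  consider (generic) "?a \<noteq> last_only_word s ?t"
    | (fresh_t) "?a = last_only_word s ?t" "?t' \<noteq> ?t"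
    | (degenerate) "?t' = ?t"
    by blast
  then show "\<exists>c\<in>three_block_code v s. d_RT 3 s x c \<le> 2 * s - 1"
  proof cases
    case generic
    have "d_RT 3 s x (three_block_word s ?a ?t) \<le> 0 + (s - 1) + s"
      by (rule d_RT_three_blocks_le)
        (auto simp: three_block_word_def take_word_def dest: block_1)
    then show ?thesis
      using code_mem[OF a t(1) generic] assms by force
  next
    case fresh_t
    then have "?a \<noteq> last_only_word s ?t'"
      by (metis last_only_word_def)
    moreover have "d_RT 3 s x (three_block_word s ?a ?t') \<le> 0 + s + (s - 1)"
      by (rule d_RT_three_blocks_le)
        (auto simp: three_block_word_def take_word_def dest: block_2)
    ultimately show ?thesis
      using code_mem[OF a t(2)] assms by force
  next
    case degenerate
    let ?a' = "?a(0 := 1)"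
    have "?a' \<in> words v s"
      using a assms unfolding words_def by auto
    moreover have "?a' \<noteq> last_only_word s ?t"
      using assms by (auto simp: fun_eq_iff last_only_word_def)
    moreover have "d_RT 3 s x (three_block_word s ?a' ?t) \<le> 1 + (s - 1) + (s - 1)"
      using degenerate
      by (intro d_RT_three_blocks_le)
        (auto simp: three_block_word_def take_word_def dest: block_1 block_2)
    ultimately show ?thesis
      using code_mem[OF _ t(1)] assms by force
  qed
qed

theorem theorem4:
  fixes v s :: nat
  assumes "v \<ge> 2" and "s \<ge> 2"
  shows "K_RT v 2 s s \<le> v ^ (s - 2) * (v ^ 2 - 1) \<and>
         K_RT v 3 s (2 * s - 1) \<le> v * (v ^ s - 1)"
proof
  show "K_RT v 2 s s \<le> v ^ (s - 2) * (v ^ 2 - 1)"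
    using assms by (intro K_RT_le[OF two_block_code_covering] card_two_block_code) auto
  show "K_RT v 3 s (2 * s - 1) \<le> v * (v ^ s - 1)"
    using assms by (intro K_RT_le[OF three_block_code_covering] card_three_block_code) auto
qed

end
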